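(* Let $L\ge1$, $S_0>0$, $N_0\ge0$, and for $l=1,\dots,L$ let $S_l,N_l\ge 0$ and constants $A_l>0$, $B_l,C_l,\xi_l\ge 0$ satisfy $S_l\ge A_lS_{l-1}$ and $N_l\le B_lN_{l-1}+C_lS_{l-1}+\xi_l$. Let $D$ be a finite set of documents, $D^+\subseteq D$ a nonempty gold set, $S_D:D\to[0,\infty)$ a document score function, and $P_k$ a set of $k$ documents with the largest scores (ties arbitrary). Fix $0<\rho\le\rho_A$, put $m_\rho=\lceil\rho|D^+|\rceil$, let $\tau_\rho^+$ be the $m_\rho$-th largest gold score, $\mathcal B_\rho=\min\{k:|P_k\cap D^+|\ge m_\rho\}$ and $M_L^-=\sum_{d\in D\setminus D^+}S_D(d)$. Assume there are constants $K_A\ge0$, $\zeta_A\ge0$, $c_\rho\in(0,1]$ with $$M_L^-\le K_AN_L+\zeta_A,\qquad \tau_\rho^+\ge\frac{c_\rho}{m_\rho}S_L .$$ Then $$\mathcal B_\rho\le m_\rho+\frac{m_\rho K_A}{c_\rho}\operatorname{SNR}_L^{-1}+\frac{m_\rho\zeta_A}{c_\rho S_L},$$ and consequently $$\mathcal B_\rho\le m_\rho+\frac{m_\rho K_A}{c_\rho}\Big[\Big(\prod_{l=1}^{L}\frac{B_l}{A_l}\Big)\operatorname{SNR}_0^{-1}+\sum_{i=1}^{L}\Big(\frac{C_i}{A_i}+\frac{\xi_i}{A_iS_{i-1}}\Big)\prod_{t=i+1}^{L}\frac{B_t}{A_t}\Big]+\frac{m_\rho\zeta_A}{c_\rho S_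L}.$$
   Context: $\operatorname{SNR}_l=S_l/N_l$ ($+\infty$ if $N_l=0$), $\operatorname{SNR}_l^{-1}=N_l/S_l$; empty products equal $1$. In the paper $S_l,N_l$ are entity-level evidence-signal and noise masses at layer $l$ of a graph reader, and document scores come from entity-to-document projection. $\rho_A\in[0,1]$ is the anchor coverage: given an entity set $R_q$ (recoverable evidence region) and anchor sets $A(d)$ of entities for documents $d$, $\rho_A=|\{d\in D^+:A(d)\cap R_q\neq\varnothing\}|/|D^+|$. *)

theory Defs
  imports Complex_Main "HOL-Library.Multiset"
begin

definition snr_inv :: "real \<Rightarrow> real \<Rightarrow> real" where
  "snr_inv S N = N / S"

definition anchor_coverage :: "'e set \<Rightarrow> ('d \<Rightarrow> 'e set) \<Rightarrow> 'd set \<Rightarrow> real" where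
  "anchor_coverage Rq Anch Dp =
     real (card {d \<in> Dp. Anch d \<inter> Rq \<noteq> {}}) / real (card Dp)"

definition m_rho :: "real \<Rightarrow> 'd set \<Rightarrow> nat" where
  "m_rho \<rho> Dp = nat \<lceil>\<rho> * real (card Dp)\<rceil>"

text \<open>The m-th largest gold score (counted with multiplicity), m \<ge> 1.\<close>
definition mth_largest_score :: "('d \<Rightarrow> real) \<Rightarrow> 'd set \<Rightarrow> nat \<Rightarrow> real" where
  "mth_largest_score sc Dp m = rev (sorted_list_of_multiset (image_mset sc (mset_set Dp))) ! (m - 1)"

definition topk_family :: "'d set \<Rightarrow> ('d \<Rightarrow> real) \<Rightarrow> (nat \<Rightarrow> 'd set) \<Rightarrow> bool" where
  "topk_family D sc P \<longleftrightarrow> (\<forall>k \<le> card D. P k \<subseteq> D \<and> card (P k) = k \<and>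
      (\<forall>x \<in> P k. \<forall>y \<in> D - P k. sc y \<le> sc x))"

definition budget :: "'d set \<Rightarrow> (nat \<Rightarrow> 'd set) \<Rightarrow> 'd set \<Rightarrow> nat \<Rightarrow> nat" where
  "budget D P Dp m = (LEAST k. k \<le> card D \<and> m \<le> card (P k \<inter> Dp))"

end

theory Submission
  imports Defs
begin

(* The budget is controlled by the superlevel set {sc >= tau} of the m-th largest gold
   score tau.  It holds at least m gold documents, so the top-k set for
   k = m + #{non-gold documents with score >= tau} lies inside it and already contains
   m gold documents.  A Markov-type count bounds that number of non-gold documents by
   M^- / tau, which the hypotheses on M^- and tau turn into the SNR form.  The second
   bound unrolls the one-layer inequality
   SNR_l^-1 <= (B_l / A_l) SNR_(l-1)^-1 + C_l / A_l + xi_l / (A_l S_(l-1))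
   as a discrete Gronwall recursion. *)

lemma unrolled_affine_recursion_Suc:
  fixes b e :: "nat \<Rightarrow> 'a::comm_semiring_1"
  shows "(\<Prod>j = 1..Suc l. b j) * x0 + (\<Sum>i = 1..Suc l. e i * (\<Prod>t = i + 1..Suc l. b t))
       = b (Suc l) * ((\<Prod>j = 1..l. b j) * x0 + (\<Sum>i = 1..l. e i * (\<Prod>t = i + 1..l. b t)))
         + e (Suc l)"
proof -
  have "(\<Sum>i = 1..l. e i * (\<Prod>t = i + 1..Suc l. b t))
      = b (Suc l) * (\<Sum>i = 1..l. e i * (\<Prod>t = i + 1..l. b t))"
    by (auto simp: sum_distrib_left prod.nat_ivl_Suc' mult_ac intro!: sum.cong)
  then show ?thesis
    by (simp add: prod.nat_ivl_Suc' sum.nat_ivl_Suc' algebra_simps)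
qed

lemma discrete_gronwall:
  fixes x b e :: "nat \<Rightarrow> real"
  assumes rec: "\<forall>l \<in> {1..L}. x l \<le> b l * x (l - 1) + e l"
    and b_nonneg: "\<forall>l \<in> {1..L}. b l \<ge> 0"
  shows "l \<le> L \<Longrightarrow>
    x l \<le> (\<Prod>j = 1..l. b j) * x 0 + (\<Sum>i = 1..l. e i * (\<Prod>t = i + 1..l. b t))"
proof (induction l)
  case 0
  then show ?case by simp
next
  case (Suc l)
  then have l: "Suc l \<in> {1..L}" by simp
  have "x (Suc l) \<le> b (Suc l) * x l + e (Suc l)"
    using rec l by fastforce
  also have "\<dots> \<le> b (Suc l) * ((\<Prod>j = 1..l. b j) * x 0
      + (\<Sum>i = 1..l. e i * (\<Prod>t = i + 1..l. b t))) + e (Suc l)"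
    using Suc b_nonneg l by (simp add: mult_left_mono)
  finally show ?case
    by (simp only: unrolled_affine_recursion_Suc)
qed

lemma signal_pos:
  fixes S A :: "nat \<Rightarrow> real"
  assumes S0: "S 0 > 0"
    and A_pos: "\<forall>l \<in> {1..L}. A l > 0"
    and sig: "\<forall>l \<in> {1..L}. S l \<ge> A l * S (l - 1)"
  shows "l \<le> L \<Longrightarrow> S l > 0"
proof (induction l)
  case (Suc l)
  then have l: "Suc l \<in> {1..L}" by simp
  have "A (Suc l) * S l > 0" using Suc A_pos l by simp
  also have "\<dots> \<le> S (Suc l)" using sig l by fastforce
  finally show ?case .
qed (use S0 in simp)

lemma snr_inv_step:
  fixes S S' N N' A B C \<xi> :: real
  assumes "S > 0" "A > 0" "B \<ge> 0" "N' \<ge> 0"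
    and sig: "S' \<ge> A * S"
    and noise: "N' \<le> B * N + C * S + \<xi>"
  shows "snr_inv S' N' \<le> B / A * snr_inv S N + (C / A + \<xi> / (A * S))"
proof -
  have AS: "A * S > 0" using assms by simp
  moreover have "S' > 0" using AS sig by linarith
  ultimately have "N' / S' \<le> N' / (A * S)"
    using assms by (intro divide_left_mono) auto
  also have "\<dots> \<le> (B * N + C * S + \<xi>) / (A * S)"
    using noise AS by (simp add: divide_right_mono)
  also have "\<dots> = B / A * (N / S) + (C / A + \<xi> / (A * S))"
    using assms by (simp add: field_simps)
  finally show ?thesis unfolding snr_inv_def .
qed

lemma snr_inv_unrolled_bound:
  fixes S N A B C \<xi> :: "nat \<Rightarrow> real"
  assumes S0: "S 0 > 0"
    and N_nonneg: "\<forall>l \<in> {1..L}. N l \<ge> 0"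
    and coef: "\<forall>l \<in> {1..L}. A l > 0 \<and> B l \<ge> 0"
    and sig: "\<forall>l \<in> {1..L}. S l \<ge> A l * S (l - 1)"
    and noise: "\<forall>l \<in> {1..L}. N l \<le> B l * N (l - 1) + C l * S (l - 1) + \<xi> l"
  shows "snr_inv (S L) (N L) \<le> (\<Prod>l = 1..L. B l / A l) * snr_inv (S 0) (N 0)
      + (\<Sum>i = 1..L. (C i / A i + \<xi> i / (A i * S (i - 1))) * (\<Prod>t = i + 1..L. B t / A t))"
proof -
  have "S l > 0" if "l \<le> L" for l
    using signal_pos[OF S0 _ sig] coef that by auto
  then show ?thesis
    using coef N_nonneg sig noise
    by (intro discrete_gronwall[where L = L] ballI snr_inv_step) (auto simp: less_imp_le)
qed

lemma anchor_coverage_le_one: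
  assumes "finite Dp"
  shows "anchor_coverage Rq Anch Dp \<le> 1"
proof -
  have "card {d \<in> Dp. Anch d \<inter> Rq \<noteq> {}} \<le> card Dp"
    using assms by (intro card_mono) auto
  then show ?thesis unfolding anchor_coverage_def
    by (cases "card Dp = 0") (auto simp: divide_le_eq_1)
qed

lemma m_rho_bounds:
  assumes "finite Dp" "Dp \<noteq> {}" "0 < \<rho>" "\<rho> \<le> 1"
  shows "1 \<le> m_rho \<rho> Dp" "m_rho \<rho> Dp \<le> card Dp"
proof -
  have card: "real (card Dp) > 0" using assms by (simp add: card_gt_0_iff)
  then have "0 < \<lceil>\<rho> * real (card Dp)\<rceil>" using assms by simp
  then show "1 \<le> m_rho \<rho> Dp" unfolding m_rho_def by linarith
  have "\<rho> * real (card Dp) \<le> real (card Dp)"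
    using assms card by (simp add: mult_le_cancel_right1)
  then have "\<lceil>\<rho> * real (card Dp)\<rceil> \<le> int (card Dp)"
    by (simp add: ceiling_le_iff)
  then show "m_rho \<rho> Dp \<le> card Dp" unfolding m_rho_def by linarith
qed

lemma mth_largest_score_le_card:
  fixes sc :: "'d \<Rightarrow> real"
  assumes fin: "finite Dp" and m: "1 \<le> m" "m \<le> card Dp"
  shows "m \<le> card {d \<in> Dp. mth_largest_score sc Dp m \<le> sc d}"
proof -
  define ys where "ys = sorted_list_of_multiset (image_mset sc (mset_set Dp))"
  define \<tau> where "\<tau> = mth_largest_score sc Dp m"
  have mset_ys: "mset ys = image_mset sc (mset_set Dp)" unfolding ys_def by simp
  have len: "length ys = card Dp" using arg_cong[OF mset_ys, of size] by simp
  have \<tau>: "\<tau> = ys ! (length ys - m)"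
    unfolding \<tau>_def mth_largest_score_def ys_def[symmetric] using m len by (simp add: rev_nth)
  have top: "\<forall>v \<in> set (take m (rev ys)). \<tau> \<le> v"
  proof
    fix v assume "v \<in> set (take m (rev ys))"
    then obtain j where "j < m" "v = ys ! (length ys - 1 - j)"
      using m len by (auto simp: in_set_conv_nth rev_nth)
    then show "\<tau> \<le> v" unfolding \<tau> using m len
      by (simp add: ys_def sorted_nth_mono)
  qed
  have "m = length (filter (\<lambda>v. \<tau> \<le> v) (take m (rev ys)))"
    using top m len by simp
  also have "\<dots> \<le> length (filter (\<lambda>v. \<tau> \<le> v) (rev ys))"
    by (metis append_take_drop_id filter_append le_add1 length_append)
  also have "\<dots> = size (filter_mset (\<lambda>v. \<tau> \<le> v) (image_mset sc (mset_set Dp)))"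
    by (metis mset_filter mset_rev mset_ys size_mset)
  also have "\<dots> = card {d \<in> Dp. \<tau> \<le> sc d}"
    using fin by (simp add: filter_mset_image_mset filter_mset_mset_set)
  finally show ?thesis unfolding \<tau>_def .
qed

lemma topk_subset_superlevel:
  assumes topk: "topk_family D sc P" and fin: "finite D"
    and k: "k \<le> card {d \<in> D. \<tau> \<le> sc d}"
  shows "P k \<subseteq> {d \<in> D. \<tau> \<le> sc d}"
proof (rule ccontr)
  let ?T = "{d \<in> D. \<tau> \<le> sc d}"
  have "card ?T \<le> card D" using fin by (intro card_mono) auto
  with k have "k \<le> card D" by linarith
  then have Pk: "P k \<subseteq> D" "card (P k) = k" "\<forall>x \<in> P k. \<forall>y \<in> D - P k. sc y \<le> sc x"
    using topk unfolding topk_family_def by auto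
  assume "\<not> P k \<subseteq> ?T"
  then obtain x where x: "x \<in> P k" "x \<notin> ?T" by blast
  with Pk(1) have x_below: "sc x < \<tau>" by auto
  have "?T \<subseteq> P k"
  proof
    fix y assume y: "y \<in> ?T"
    show "y \<in> P k"
    proof (rule ccontr)
      assume "y \<notin> P k"
      with y x Pk(3) have "sc y \<le> sc x" by blast
      with y x_below show False by simp
    qed
  qed
  with x have "?T \<subset> P k" by blast
  then have "card ?T < card (P k)"
    using Pk(1) fin by (meson finite_subset psubset_card_mono)
  with Pk(2) k show False by linarith
qed

lemma budget_le_card_superlevel:
  assumes fin: "finite D" and Dp: "Dp \<subseteq> D" and topk: "topk_family D sc P"
    and gold: "m \<le> card {d \<in> Dp. \<tau> \<le> sc d}"
  shows "budget D P Dp m \<le> m + card {d \<in> D - Dp. \<tau> \<le> sc d}"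
proof -
  let ?T = "{d \<in> D. \<tau> \<le> sc d}" and ?G = "{d \<in> Dp. \<tau> \<le> sc d}"
    and ?N = "{d \<in> D - Dp. \<tau> \<le> sc d}"
  define k where "k = m + card ?N"
  have "?T = ?G \<union> ?N" using Dp by auto
  moreover have "card (?G \<union> ?N) = card ?G + card ?N"
    using finite_subset[OF Dp fin] fin by (intro card_Un_disjoint) auto
  ultimately have k_T: "k \<le> card ?T" using gold unfolding k_def by simp
  moreover have "card ?T \<le> card D" using fin by (intro card_mono) auto
  ultimately have k_D: "k \<le> card D" by linarith
  with topk have Pk: "P k \<subseteq> D" "card (P k) = k" unfolding topk_family_def by auto
  have "P k - Dp \<subseteq> ?N" using topk_subset_superlevel[OF topk fin k_T] by blast
  then have "card (P k - Dp) \<le> card ?N" using fin by (intro card_mono) auto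
  moreover have "card (P k) = card (P k \<inter> Dp) + card (P k - Dp)"
    using finite_subset[OF Pk(1) fin] by (rule card_Int_Diff)
  ultimately have "m \<le> card (P k \<inter> Dp)" using Pk(2) unfolding k_def by linarith
  then have "budget D P Dp m \<le> k"
    unfolding budget_def using k_D by (intro Least_le) simp
  then show ?thesis unfolding k_def .
qed

lemma card_superlevel_mult_le_sum:
  fixes f :: "'a \<Rightarrow> real"
  assumes "finite X" "\<forall>x \<in> X. 0 \<le> f x"
  shows "real (card {x \<in> X. \<tau> \<le> f x}) * \<tau> \<le> sum f X"
proof -
  have "real (card {x \<in> X. \<tau> \<le> f x}) * \<tau> = (\<Sum>x \<in> {x \<in> X. \<tau> \<le> f x}. \<tau>)" by simp
  also have "\<dots> \<le> (\<Sum>x \<in> {x \<in> X. \<tau> \<le> f x}. f x)" by (rule sum_mono) simp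
  also have "\<dots> \<le> sum f X" using assms by (intro sum_mono2) auto
  finally show ?thesis .
qed

lemma budget_le_neg_mass_div_threshold:
  assumes fin: "finite D" and Dp: "Dp \<subseteq> D" and sc_nonneg: "\<forall>d \<in> D. sc d \<ge> 0"
    and topk: "topk_family D sc P"
    and gold: "m \<le> card {d \<in> Dp. \<tau> \<le> sc d}" and \<tau>: "\<tau> > 0"
  shows "real (budget D P Dp m) \<le> real m + (\<Sum>d \<in> D - Dp. sc d) / \<tau>"
proof -
  have "real (card {d \<in> D - Dp. \<tau> \<le> sc d}) \<le> (\<Sum>d \<in> D - Dp. sc d) / \<tau>"
    using card_superlevel_mult_le_sum[of "D - Dp" sc \<tau>] fin sc_nonneg \<tau>
    by (simp add: le_divide_eq)
  moreover have "budget D P Dp m \<le> m + card {d \<in> D - Dp. \<tau> \<le> sc d}"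
    by (rule budget_le_card_superlevel[OF fin Dp topk gold])
  ultimately show ?thesis by linarith
qed

theorem theorem1p13:
  fixes L :: nat
    and S N A B C \<xi> :: "nat \<Rightarrow> real"
    and D Dp :: "'d set"
    and sc :: "'d \<Rightarrow> real"
    and P :: "nat \<Rightarrow> 'd set"
    and Rq :: "'e set" and Anch :: "'d \<Rightarrow> 'e set"
    and \<rho> KA \<zeta>A c :: real
  assumes L: "L \<ge> 1"
    and S0: "S 0 > 0" and N0: "N 0 \<ge> 0"
    and SN_nonneg: "\<forall>l \<in> {1..L}. S l \<ge> 0 \<and> N l \<ge> 0"
    and coef: "\<forall>l \<in> {1..L}. A l > 0 \<and> B l \<ge> 0 \<and> C l \<ge> 0 \<and> \<xi> l \<ge> 0"
    and sig: "\<forall>l \<in> {1..L}. S l \<ge> A l * S (l - 1)"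
    and noise: "\<forall>l \<in> {1..L}. N l \<le> B l * N (l - 1) + C l * S (l - 1) + \<xi> l"
    and finD: "finite D" and Dp_sub: "Dp \<subseteq> D" and Dp_ne: "Dp \<noteq> {}"
    and sc_nonneg: "\<forall>d \<in> D. sc d \<ge> 0"
    and topk: "topk_family D sc P"
    and rho: "0 < \<rho>" "\<rho> \<le> anchor_coverage Rq Anch Dp"
    and KA: "KA \<ge> 0" and \<zeta>A: "\<zeta>A \<ge> 0" and c: "0 < c" "c \<le> 1"
    and neg_mass: "(\<Sum>d \<in> D - Dp. sc d) \<le> KA * N L + \<zeta>A"
    and gold_thr: "mth_largest_score sc Dp (m_rho \<rho> Dp) \<ge> c / real (m_rho \<rho> Dp) * S L"
  shows "real (budget D P Dp (m_rho \<rho> Dp)) \<le>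
           real (m_rho \<rho> Dp) + real (m_rho \<rho> Dp) * KA / c * snr_inv (S L) (N L)
           + real (m_rho \<rho> Dp) * \<zeta>A / (c * S L)
       \<and> real (budget D P Dp (m_rho \<rho> Dp)) \<le>
           real (m_rho \<rho> Dp) + real (m_rho \<rho> Dp) * KA / c *
             ((\<Prod>l = 1..L. B l / A l) * snr_inv (S 0) (N 0)
              + (\<Sum>i = 1..L. (C i / A i + \<xi> i / (A i * S (i - 1))) * (\<Prod>t = i + 1..L. B t / A t)))
           + real (m_rho \<rho> Dp) * \<zeta>A / (c * S L)"
proof -
  let ?m = "m_rho \<rho> Dp" and ?\<tau> = "mth_largest_score sc Dp (m_rho \<rho> Dp)"
  have finDp: "finite Dp" using Dp_sub finD by (rule finite_subset)
  (* The anchor coverage enters only through rho <= 1, which keeps m_rho <= |D+|. *)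
  have "\<rho> \<le> 1" using rho(2) anchor_coverage_le_one[OF finDp, of Rq Anch] by linarith
  with m_rho_bounds[OF finDp Dp_ne rho(1)] have m: "1 \<le> ?m" "?m \<le> card Dp" by auto
  have SL: "S L > 0" using signal_pos[OF S0 _ sig, of L] coef by auto
  have NL: "N L \<ge> 0" using SN_nonneg L by auto
  have thr_pos: "c * S L / ?m > 0" using c SL m by simp
  have thr: "c * S L / ?m \<le> ?\<tau>" using gold_thr by simp
  have "real (budget D P Dp ?m) \<le> ?m + (\<Sum>d \<in> D - Dp. sc d) / ?\<tau>"
    using budget_le_neg_mass_div_threshold[OF finD Dp_sub sc_nonneg topk
        mth_largest_score_le_card[OF finDp m]] thr thr_pos by linarith
  also have "\<dots> \<le> ?m + (KA * N L + \<zeta>A) / (c * S L / ?m)"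
    using neg_mass thr thr_pos KA \<zeta>A NL by (intro add_left_mono frac_le) auto
  also have "\<dots> = ?m + ?m * KA / c * snr_inv (S L) (N L) + ?m * \<zeta>A / (c * S L)"
    using c SL m by (simp add: snr_inv_def field_simps)
  finally have first: "real (budget D P Dp ?m) \<le>
      ?m + ?m * KA / c * snr_inv (S L) (N L) + ?m * \<zeta>A / (c * S L)" .
  have "snr_inv (S L) (N L) \<le> (\<Prod>l = 1..L. B l / A l) * snr_inv (S 0) (N 0)
      + (\<Sum>i = 1..L. (C i / A i + \<xi> i / (A i * S (i - 1))) * (\<Prod>t = i + 1..L. B t / A t))"
    using SN_nonneg coef by (intro snr_inv_unrolled_bound[OF S0 _ _ sig noise]) auto
  then have "?m * KA / c * snr_inv (S L) (N L) \<le> ?m * KA / c *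
      ((\<Prod>l = 1..L. B l / A l) * snr_inv (S 0) (N 0)
       + (\<Sum>i = 1..L. (C i / A i + \<xi> i / (A i * S (i - 1))) * (\<Prod>t = i + 1..L. B t / A t)))"
    using KA c by (intro mult_left_mono) auto
  with first show ?thesis by linarith
qed

end
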